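(* Let $\alpha_1,\alpha_2 \ge 0$, $\beta_1,\beta_2 \in [0,1]$, and let $U_1, U_2, V_1, V_2$ be random variables with $U_1, U_2$ independent and $V_1, V_2$ independent. If $V_i \preceq_{(\alpha_i, \beta_i)} U_i$ for $i \in \{1,2\}$, then $V_1 + V_2 \preceq_{(\alpha_1+\alpha_2,\, \beta_1+\beta_2)} U_1 + U_2$.
   Context: For a random variable $X$ (possibly taking values $\pm\infty$) let $\bar{F}_X(x) = 1 - F_X(x)$ be its complementary CDF. Given $\alpha \ge 0$, $\beta \in [0,1]$, we write $V \preceq_{(\alpha,\beta)} U$ ($U$ $(\alpha,\beta)$-approximately stochastically dominates $V$) if $\bar{F}_V(x) \le \bar{F}_U(x-\alpha) + \beta$ for all $x \in [-\infty,\infty]$. *)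

theory Defs
  imports "HOL-Probability.Probability"
begin

definition ecdf_rv :: "'a measure \<Rightarrow> ('a \<Rightarrow> ereal) \<Rightarrow> ereal \<Rightarrow> real" where
  "ecdf_rv M X x = measure M {\<omega> \<in> space M. X \<omega> \<le> x}"

definition ccdf_rv :: "'a measure \<Rightarrow> ('a \<Rightarrow> ereal) \<Rightarrow> ereal \<Rightarrow> real" where
  "ccdf_rv M X x = 1 - ecdf_rv M X x"

definition approx_dom ::
  "'b measure \<Rightarrow> ('b \<Rightarrow> ereal) \<Rightarrow> 'a measure \<Rightarrow> ('a \<Rightarrow> ereal) \<Rightarrow> real \<Rightarrow> real \<Rightarrow> bool" where
  "approx_dom MV V MU U \<alpha> \<beta> \<longleftrightarrow>
     (\<forall>x::ereal. ccdf_rv MV V x \<le> ccdf_rv MU U (x - ereal \<alpha>) + \<beta>)"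

end

theory Submission
  imports Defs
begin

text \<open>Translate the dominance hypotheses into statements about the laws P_i of V_i and
  Q_i of U_i + \<alpha>_i, namely P_i(y,\<infinity>] \<le> Q_i(y,\<infinity>] + \<beta>_i for every y. By independence the laws
  of V1 + V2 and U1 + U2 + \<alpha>1 + \<alpha>2 are the images of P1 \<otimes> P2 and Q1 \<otimes> Q2 under
  addition. Replacing first P1 by Q1 and then P2 by Q2 in the product changes the measure
  of the event {x < a + b} by at most \<beta>1 and \<beta>2 respectively (Fubini), because all
  sections of this event are tails of the extended real line; the only section that is not an
  open ray {y<..} is {\<infinity>} (from b = -\<infinity>), which is handled by continuity from above.\<close>

lemma ennreal_le_add_iff_le_add:
  assumes "0 \<le> a" "0 \<le> b" "0 \<le> c"
  shows "ennreal a \<le> ennreal b + ennreal c \<longleftrightarrow> a \<le> b + c"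
  using assms by (simp add: ennreal_plus[symmetric] del: ennreal_plus)

lemma emeasure_pair_le_of_sections_snd:
  assumes M1: "prob_space M1" and M2: "sigma_finite_measure M2"
    and M2': "sigma_finite_measure M2'" and sets: "sets M2' = sets M2"
    and A: "A \<in> sets (M1 \<Otimes>\<^sub>M M2)"
    and le: "\<And>x. x \<in> space M1 \<Longrightarrow> emeasure M2 (Pair x -` A) \<le> emeasure M2' (Pair x -` A) + c"
  shows "emeasure (M1 \<Otimes>\<^sub>M M2) A \<le> emeasure (M1 \<Otimes>\<^sub>M M2') A + c"
proof -
  have A': "A \<in> sets (M1 \<Otimes>\<^sub>M M2')"
    using A by (simp add: sets_pair_measure_cong[OF refl sets])
  have "emeasure (M1 \<Otimes>\<^sub>M M2) A = (\<integral>\<^sup>+x. emeasure M2 (Pair x -` A) \<partial>M1)"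
    by (rule sigma_finite_measure.emeasure_pair_measure_alt[OF M2 A])
  also have "\<dots> \<le> (\<integral>\<^sup>+x. emeasure M2' (Pair x -` A) + c \<partial>M1)"
    by (intro nn_integral_mono le)
  also have "\<dots> = (\<integral>\<^sup>+x. emeasure M2' (Pair x -` A) \<partial>M1) + c"
    using sigma_finite_measure.measurable_emeasure_Pair[OF M2' A']
    by (simp add: nn_integral_add prob_space.emeasure_space_1[OF M1])
  also have "(\<integral>\<^sup>+x. emeasure M2' (Pair x -` A) \<partial>M1) = emeasure (M1 \<Otimes>\<^sub>M M2') A"
    by (rule sigma_finite_measure.emeasure_pair_measure_alt[OF M2' A', symmetric])
  finally show ?thesis .
qed

lemma emeasure_pair_le_of_sections_fst:
  assumes M1: "sigma_finite_measure M1" and M1': "sigma_finite_measure M1'"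
    and sets: "sets M1' = sets M1" and M2: "prob_space M2"
    and A: "A \<in> sets (M1 \<Otimes>\<^sub>M M2)"
    and le: "\<And>y. y \<in> space M2 \<Longrightarrow>
      emeasure M1 ((\<lambda>x. (x, y)) -` A) \<le> emeasure M1' ((\<lambda>x. (x, y)) -` A) + c"
  shows "emeasure (M1 \<Otimes>\<^sub>M M2) A \<le> emeasure (M1' \<Otimes>\<^sub>M M2) A + c"
proof -
  interpret M2: prob_space M2 by fact
  interpret M: pair_sigma_finite M1 M2
    using M1 M2.sigma_finite_measure_axioms by (rule pair_sigma_finite.intro)
  interpret M': pair_sigma_finite M1' M2
    using M1' M2.sigma_finite_measure_axioms by (rule pair_sigma_finite.intro)
  have A': "A \<in> sets (M1' \<Otimes>\<^sub>M M2)"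
    using A by (simp add: sets_pair_measure_cong[OF sets refl])
  have "emeasure (M1 \<Otimes>\<^sub>M M2) A = (\<integral>\<^sup>+y. emeasure M1 ((\<lambda>x. (x, y)) -` A) \<partial>M2)"
    by (rule M.emeasure_pair_measure_alt2[OF A])
  also have "\<dots> \<le> (\<integral>\<^sup>+y. emeasure M1' ((\<lambda>x. (x, y)) -` A) + c \<partial>M2)"
    by (intro nn_integral_mono le)
  also have "\<dots> = (\<integral>\<^sup>+y. emeasure M1' ((\<lambda>x. (x, y)) -` A) \<partial>M2) + c"
    using M'.measurable_emeasure_Pair2[OF A'] by (simp add: nn_integral_add M2.emeasure_space_1)
  also have "(\<integral>\<^sup>+y. emeasure M1' ((\<lambda>x. (x, y)) -` A) \<partial>M2) = emeasure (M1' \<Otimes>\<^sub>M M2) A"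
    by (rule M'.emeasure_pair_measure_alt2[OF A', symmetric])
  finally show ?thesis .
qed

lemma measure_pair_le_of_sections:
  assumes P1: "prob_space P1" and Q1: "prob_space Q1" and P2: "prob_space P2" and Q2: "prob_space Q2"
    and sets1: "sets Q1 = sets P1" and sets2: "sets Q2 = sets P2"
    and A: "A \<in> sets (P1 \<Otimes>\<^sub>M P2)" and "0 \<le> \<beta>1" "0 \<le> \<beta>2"
    and le1: "\<And>y. y \<in> space P2 \<Longrightarrow>
      measure P1 ((\<lambda>x. (x, y)) -` A) \<le> measure Q1 ((\<lambda>x. (x, y)) -` A) + \<beta>1"
    and le2: "\<And>x. x \<in> space Q1 \<Longrightarrow> measure P2 (Pair x -` A) \<le> measure Q2 (Pair x -` A) + \<beta>2"
  shows "measure (P1 \<Otimes>\<^sub>M P2) A \<le> measure (Q1 \<Otimes>\<^sub>M Q2) A + (\<beta>1 + \<beta>2)"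
proof -
  note prob = P1 Q1 P2 Q2 prob_space_pair[OF P1 P2] prob_space_pair[OF Q1 Q2]
  note emeasure_eq = prob[THEN prob_space.axioms(1), THEN finite_measure.emeasure_eq_measure]
  have A': "A \<in> sets (Q1 \<Otimes>\<^sub>M P2)"
    using A by (simp add: sets_pair_measure_cong[OF sets1 refl])
  have "emeasure (P1 \<Otimes>\<^sub>M P2) A \<le> emeasure (Q1 \<Otimes>\<^sub>M P2) A + ennreal \<beta>1"
    using prob le1 \<open>0 \<le> \<beta>1\<close>
    by (intro emeasure_pair_le_of_sections_fst[OF _ _ sets1 P2 A])
       (auto simp: prob_space_imp_sigma_finite emeasure_eq ennreal_le_add_iff_le_add)
  also have "emeasure (Q1 \<Otimes>\<^sub>M P2) A \<le> emeasure (Q1 \<Otimes>\<^sub>M Q2) A + ennreal \<beta>2"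
    using prob le2 \<open>0 \<le> \<beta>2\<close>
    by (intro emeasure_pair_le_of_sections_snd[OF Q1 _ _ sets2 A'])
       (auto simp: prob_space_imp_sigma_finite emeasure_eq ennreal_le_add_iff_le_add)
  finally show ?thesis
    using prob \<open>0 \<le> \<beta>1\<close> \<open>0 \<le> \<beta>2\<close>
    by (simp add: emeasure_eq ennreal_plus[symmetric] add.assoc add.commute
        del: ennreal_plus)
qed

definition tail_dominated :: "ereal measure \<Rightarrow> ereal measure \<Rightarrow> real \<Rightarrow> bool" where
  "tail_dominated P Q \<beta> \<longleftrightarrow> (\<forall>y. measure P {y<..} \<le> measure Q {y<..} + \<beta>)"

lemma tail_dominated_singleton_infinity:
  assumes P: "prob_space P" and Q: "prob_space Q"
    and sP: "sets P = sets borel" and sQ: "sets Q = sets borel"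
    and dom: "tail_dominated P Q \<beta>"
  shows "measure P {\<infinity>} \<le> measure Q {\<infinity>} + \<beta>"
proof -
  interpret P: prob_space P by fact
  interpret Q: prob_space Q by fact
  define A where "A n = {ereal (real n)<..}" for n :: nat
  have "decseq A"
    by (auto simp: decseq_def A_def intro: le_less_trans)
  have sets: "range A \<subseteq> sets P" "range A \<subseteq> sets Q"
    by (auto simp: A_def sP sQ)
  have "x \<notin> (\<Inter>n. A n)" if "x \<noteq> \<infinity>" for x
  proof -
    obtain n :: nat where "x \<le> ereal (real n)"
      using \<open>x \<noteq> \<infinity>\<close> by (cases x) (auto intro: real_nat_ceiling_ge)
    then have "x \<notin> A n"
      by (simp add: A_def not_less)
    then show ?thesis by blast
  qed
  then have "(\<Inter>n. A n) = {\<infinity>}"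
    by (auto simp: A_def)
  then have "(\<lambda>n. measure P (A n)) \<longlonglongrightarrow> measure P {\<infinity>}"
    and "(\<lambda>n. measure Q (A n) + \<beta>) \<longlonglongrightarrow> measure Q {\<infinity>} + \<beta>"
    using P.finite_Lim_measure_decseq[OF sets(1) \<open>decseq A\<close>]
      Q.finite_Lim_measure_decseq[OF sets(2) \<open>decseq A\<close>]
    by (auto intro: tendsto_add)
  then show ?thesis
    by (rule LIMSEQ_le) (use dom in \<open>auto simp: A_def tail_dominated_def\<close>)
qed

lemma tail_dominated_add_section:
  assumes P: "prob_space P" and Q: "prob_space Q"
    and sP: "sets P = sets borel" and sQ: "sets Q = sets borel"
    and dom: "tail_dominated P Q \<beta>" and "0 \<le> \<beta>"
  shows "measure P {a. x < a + b} \<le> measure Q {a. x < a + b} + \<beta>"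
proof (cases "x = \<infinity>")
  case False
  show ?thesis
  proof (cases b)
    case (real r)
    then have "{a. x < a + b} = {x - ereal r<..}"
      by (auto simp: ereal_minus_less_iff)
    then show ?thesis
      using dom by (simp add: tail_dominated_def)
  next
    case PInf
    then have "{a. x < a + b} = space P" "{a. x < a + b} = space Q"
      using False sets_eq_imp_space_eq[OF sP] sets_eq_imp_space_eq[OF sQ] by auto
    then show ?thesis
      using \<open>0 \<le> \<beta>\<close> prob_space.prob_space[OF P] prob_space.prob_space[OF Q] by simp
  next
    case MInf
    have "x < a + b \<longleftrightarrow> a = \<infinity>" for a
      using MInf False by (cases a) auto
    then have "{a. x < a + b} = {\<infinity>}"
      by auto
    then show ?thesis
      using tail_dominated_singleton_infinity[OF P Q sP sQ dom] by simp
  qed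
qed (use \<open>0 \<le> \<beta>\<close> in simp)

lemma tail_dominated_sum:
  assumes P1: "prob_space P1" and Q1: "prob_space Q1" and P2: "prob_space P2" and Q2: "prob_space Q2"
    and sets: "sets P1 = sets borel" "sets Q1 = sets borel" "sets P2 = sets borel" "sets Q2 = sets borel"
    and dom1: "tail_dominated P1 Q1 \<beta>1" and dom2: "tail_dominated P2 Q2 \<beta>2"
    and "0 \<le> \<beta>1" "0 \<le> \<beta>2"
  shows "tail_dominated (distr (P1 \<Otimes>\<^sub>M P2) borel (\<lambda>(a, b). a + b))
    (distr (Q1 \<Otimes>\<^sub>M Q2) borel (\<lambda>(a, b). a + b)) (\<beta>1 + \<beta>2)"
  unfolding tail_dominated_def
proof
  fix x :: ereal
  define A where "A = {(a, b). x < a + b}"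
  have A_borel: "A \<in> sets (borel \<Otimes>\<^sub>M borel)"
  proof -
    have "{p \<in> space (borel \<Otimes>\<^sub>M borel). x < fst p + snd p} \<in> sets (borel \<Otimes>\<^sub>M (borel :: ereal measure))"
      by measurable
    then show ?thesis
      by (simp add: A_def space_pair_measure case_prod_beta')
  qed
  have distr_eq: "measure (distr (P \<Otimes>\<^sub>M Q) borel (\<lambda>(a, b). a + b)) {x<..} = measure (P \<Otimes>\<^sub>M Q) A"
    if "sets P = sets borel" "sets Q = sets borel" for P Q :: "ereal measure"
    using that by (subst measure_distr)
      (auto simp: A_def space_pair_measure sets_pair_measure_cong[OF that] sets_eq_imp_space_eq
        intro!: arg_cong[where f="measure (P \<Otimes>\<^sub>M Q)"])
  have "measure (P1 \<Otimes>\<^sub>M P2) A \<le> measure (Q1 \<Otimes>\<^sub>M Q2) A + (\<beta>1 + \<beta>2)"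
  proof (rule measure_pair_le_of_sections[OF P1 Q1 P2 Q2])
    show "A \<in> sets (P1 \<Otimes>\<^sub>M P2)"
      using A_borel by (simp add: sets_pair_measure_cong[OF sets(1,3)])
    show "measure P1 ((\<lambda>a. (a, b)) -` A) \<le> measure Q1 ((\<lambda>a. (a, b)) -` A) + \<beta>1" for b
      using tail_dominated_add_section[OF P1 Q1 sets(1,2) dom1 \<open>0 \<le> \<beta>1\<close>]
      by (simp add: A_def)
    show "measure P2 (Pair a -` A) \<le> measure Q2 (Pair a -` A) + \<beta>2" for a
      using tail_dominated_add_section[OF P2 Q2 sets(3,4) dom2 \<open>0 \<le> \<beta>2\<close>, of x a]
      by (simp add: A_def add.commute)
  qed (use sets \<open>0 \<le> \<beta>1\<close> \<open>0 \<le> \<beta>2\<close> in auto)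
  then show "measure (distr (P1 \<Otimes>\<^sub>M P2) borel (\<lambda>(a, b). a + b)) {x<..}
      \<le> measure (distr (Q1 \<Otimes>\<^sub>M Q2) borel (\<lambda>(a, b). a + b)) {x<..} + (\<beta>1 + \<beta>2)"
    using sets by (simp add: distr_eq)
qed

lemma measure_distr_greaterThan_eq_ccdf_rv:
  assumes "prob_space M" and X: "X \<in> borel_measurable M"
  shows "measure (distr M borel X) {y<..} = ccdf_rv M X y"
proof -
  interpret prob_space M by fact
  have "{\<omega> \<in> space M. y < X \<omega>} = space M - {\<omega> \<in> space M. X \<omega> \<le> y}"
    by auto
  moreover have "{\<omega> \<in> space M. X \<omega> \<le> y} \<in> sets M"
    using X by measurable
  ultimately show ?thesis
    using X by (simp add: measure_distr vimage_def Int_def conj_commute prob_compl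
        ccdf_rv_def ecdf_rv_def)
qed

lemma approx_dom_iff_tail_dominated:
  assumes "prob_space M" "prob_space N"
    and V: "V \<in> borel_measurable N" and U: "U \<in> borel_measurable M"
  shows "approx_dom N V M U \<alpha> \<beta> \<longleftrightarrow>
    tail_dominated (distr N borel V) (distr M borel (\<lambda>\<omega>. U \<omega> + ereal \<alpha>)) \<beta>"
proof -
  have "{\<omega> \<in> space M. y < U \<omega> + ereal \<alpha>} = {\<omega> \<in> space M. y - ereal \<alpha> < U \<omega>}" for y
    by (auto simp: ereal_minus_less_iff)
  then have "measure (distr M borel (\<lambda>\<omega>. U \<omega> + ereal \<alpha>)) {y<..} = ccdf_rv M U (y - ereal \<alpha>)" for y
    using measure_distr_greaterThan_eq_ccdf_rv[OF \<open>prob_space M\<close> U, of "y - ereal \<alpha>"] U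
    by (simp add: measure_distr vimage_def Int_def conj_commute)
  then show ?thesis
    by (simp add: approx_dom_def tail_dominated_def
        measure_distr_greaterThan_eq_ccdf_rv[OF \<open>prob_space N\<close> V])
qed

lemma (in prob_space) distr_add_indep_var:
  fixes X Y :: "'a \<Rightarrow> ereal"
  assumes "indep_var borel X borel Y"
  shows "distr M borel (\<lambda>\<omega>. X \<omega> + Y \<omega>) =
    distr (distr M borel X \<Otimes>\<^sub>M distr M borel Y) borel (\<lambda>(a, b). a + b)"
proof -
  have "random_variable borel X" "random_variable borel Y"
    and "distr M borel X \<Otimes>\<^sub>M distr M borel Y = distr M (borel \<Otimes>\<^sub>M borel) (\<lambda>\<omega>. (X \<omega>, Y \<omega>))"
    using assms by (simp_all add: indep_var_distribution_eq)
  then show ?thesis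
    by (simp add: distr_distr comp_def)
qed

theorem mainTheorem3:
  fixes M :: "'a measure" and N :: "'b measure"
    and U1 U2 :: "'a \<Rightarrow> ereal" and V1 V2 :: "'b \<Rightarrow> ereal"
    and \<alpha>1 \<alpha>2 \<beta>1 \<beta>2 :: real
  assumes "prob_space M" and "prob_space N"
    and "U1 \<in> borel_measurable M" and "U2 \<in> borel_measurable M"
    and "V1 \<in> borel_measurable N" and "V2 \<in> borel_measurable N"
    and "prob_space.indep_var M borel U1 borel U2"
    and "prob_space.indep_var N borel V1 borel V2"
    and "\<alpha>1 \<ge> 0" and "\<alpha>2 \<ge> 0"
    and "\<beta>1 \<in> {0..1}" and "\<beta>2 \<in> {0..1}"
    and "approx_dom N V1 M U1 \<alpha>1 \<beta>1"
    and "approx_dom N V2 M U2 \<alpha>2 \<beta>2"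
  shows "approx_dom N (\<lambda>\<omega>. V1 \<omega> + V2 \<omega>) M (\<lambda>\<omega>. U1 \<omega> + U2 \<omega>) (\<alpha>1 + \<alpha>2) (\<beta>1 + \<beta>2)"
proof -
  interpret M: prob_space M by fact
  interpret N: prob_space N by fact
  define W1 where "W1 \<omega> = U1 \<omega> + ereal \<alpha>1" for \<omega>
  define W2 where "W2 \<omega> = U2 \<omega> + ereal \<alpha>2" for \<omega>
  have W: "W1 \<in> borel_measurable M" "W2 \<in> borel_measurable M"
    using assms(3,4) by (simp_all add: W1_def[abs_def] W2_def[abs_def])
  have indep_W: "M.indep_var borel W1 borel W2"
    using M.indep_var_compose[OF assms(7), of "\<lambda>u. u + ereal \<alpha>1" borel "\<lambda>u. u + ereal \<alpha>2" borel]
    by (simp add: comp_def W1_def[abs_def] W2_def[abs_def])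
  have "tail_dominated (distr N borel V1) (distr M borel W1) \<beta>1"
    and "tail_dominated (distr N borel V2) (distr M borel W2) \<beta>2"
    using assms(13,14) unfolding W1_def[abs_def] W2_def[abs_def]
    by (simp_all add: approx_dom_iff_tail_dominated[OF assms(1,2)] assms(3-6))
  then have "tail_dominated (distr N borel (\<lambda>\<omega>. V1 \<omega> + V2 \<omega>)) (distr M borel (\<lambda>\<omega>. W1 \<omega> + W2 \<omega>))
      (\<beta>1 + \<beta>2)"
    unfolding N.distr_add_indep_var[OF assms(8)] M.distr_add_indep_var[OF indep_W]
    using assms(5,6,11,12) W by (intro tail_dominated_sum) (auto intro: M.prob_space_distr N.prob_space_distr)
  moreover have "U1 \<omega> + U2 \<omega> + ereal (\<alpha>1 + \<alpha>2) = W1 \<omega> + W2 \<omega>" for \<omega>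
    by (simp only: W1_def W2_def plus_ereal.simps(1)[symmetric] ac_simps)
  ultimately show ?thesis
    using assms(1-6) by (simp add: approx_dom_iff_tail_dominated)
qed

end
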